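(* For every relaxed scenario $\mathscr{S}$, the strict orthology graph $\mathrm{sO}(\mathscr{S})$ is a cograph.
   Context: All trees are planted phylogenetic trees: a tree $T$ has a distinguished vertex $0_T$ of degree $1$ whose unique neighbor $\rho_T$ is the root, and every vertex other than $0_T$ and the leaves $L(T)$ has at least two children. For $x,y\in V(T)$ write $y\preceq_T x$ if $x$ lies on the path from $0_T$ to $y$; edges are written $uv$ with $v\prec_T u$. The order extends to $V(T)\cup E(T)$: for a vertex $x$ and an edge $e=uv$, $x\preceq_T e$ iff $x\preceq_T v$, and $e\preceq_T x$ iff $u\preceq_T x$; for edges, $uv\preceq_T ab$ iff $v\preceq_T b$. Two elements are comparable if one is $\preceq$ the other. $\mathrm{lca}_T$ denotes the last common ancestor. A time map for $T$ is $\tau_T\colon V(T)\to\mathbb{R}$ with $\tau_T(x)<\tau_T(y)$ whenever $x\prec_T y$. A relaxed scenario $\mathscr{S}=(T,S,\sigma,\mu,\tau_T,\tau_S)$ consists of a gene tree $T$ with time map $\tau_T$, a species tree $S$ with time map $\tau_S$, a map $\sigma\colon L(T)\to M$ with $M\subseteq L(S)$, and a map $\mu\colon V(T)\to V(S)\cup E(S)$ such that (S0) $\mu(x)=0_S$ iff $x=0_T$; (S1) $\mu(x)\in L(S)$ iff $x\in L(T)$, in which case $\mu(x)=\sigma(x)$; (S2) if $\mu(x)\in V(S)$ then $\tau_S(\mu(x))=\tau_T(x)$; (S3) if $\mu(x)=uv\in E(S)$ then $\tau_S(v)<\tau_T(x)<\tau_S(u)$. An edge $uv\in E(T)$ is an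 HGT-edge if $\mu(u)$ and $\mu(v)$ are incomparable in $S$. The strict orthology graph $\mathrm{sO}(\mathscr{S})$ has vertex set $L(T)$ and edges $xy$, $x\ne y$, such that $\mu(\mathrm{lca}_T(x,y))=\mathrm{lca}_S(\sigma(x),\sigma(y))$ and the path between $x$ and $y$ in $T$ contains no HGT-edge. A cograph is a graph with no induced path on four vertices. *)

theory Defs
  imports Main "HOL.Real"
begin

text \<open>A rooted tree is given by a vertex set V, a set E of directed edges (u,v)
  meaning v is a child of u (so v \<prec> u), and the distinguished vertex 0_T.\<close>

definition children :: "('v \<times> 'v) set \<Rightarrow> 'v \<Rightarrow> 'v set" where
  "children E x = {y. (x, y) \<in> E}"

definition planted_tree :: "'v set \<Rightarrow> ('v \<times> 'v) set \<Rightarrow> 'v \<Rightarrow> bool" where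
  "planted_tree V E r \<longleftrightarrow>
     finite V \<and> E \<subseteq> V \<times> V \<and> r \<in> V \<and>
     (\<forall>x\<in>V. (r, x) \<in> E\<^sup>*) \<and>
     (\<forall>x. (x, r) \<notin> E) \<and>
     (\<forall>x\<in>V - {r}. \<exists>!u. (u, x) \<in> E) \<and>
     card (children E r) = 1 \<and>
     (\<forall>x\<in>V. x \<noteq> r \<and> children E x \<noteq> {} \<longrightarrow> card (children E x) \<ge> 2)"

definition leaves :: "'v set \<Rightarrow> ('v \<times> 'v) set \<Rightarrow> 'v set" where
  "leaves V E = {x \<in> V. children E x = {}}"

text \<open>preceq E y x : y \<preceq> x, i.e. x lies on the path from the planted root to y.\<close>
definition preceq :: "('v \<times> 'v) set \<Rightarrow> 'v \<Rightarrow> 'v \<Rightarrow> bool" where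
  "preceq E y x \<longleftrightarrow> (x, y) \<in> E\<^sup>*"

definition prec :: "('v \<times> 'v) set \<Rightarrow> 'v \<Rightarrow> 'v \<Rightarrow> bool" where
  "prec E y x \<longleftrightarrow> preceq E y x \<and> y \<noteq> x"

text \<open>Elements of V(T) \<union> E(T); the edge uv is written Ed u v with v \<prec> u.\<close>
datatype 'v tree_elem = Vx 'v | Ed 'v 'v

fun preceq_el :: "('v \<times> 'v) set \<Rightarrow> 'v tree_elem \<Rightarrow> 'v tree_elem \<Rightarrow> bool" where
  "preceq_el E (Vx x) (Vx y) = preceq E x y"
| "preceq_el E (Vx x) (Ed u v) = preceq E x v"
| "preceq_el E (Ed u v) (Vx x) = preceq E u x"
| "preceq_el E (Ed u v) (Ed a b) = preceq E v b"

definition comparable :: "('v \<times> 'v) set \<Rightarrow> 'v tree_elem \<Rightarrow> 'v tree_elem \<Rightarrow> bool" where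
  "comparable E a b \<longleftrightarrow> preceq_el E a b \<or> preceq_el E b a"

definition elems :: "'v set \<Rightarrow> ('v \<times> 'v) set \<Rightarrow> 'v tree_elem set" where
  "elems V E = Vx ` V \<union> (\<lambda>(u, v). Ed u v) ` E"

definition lca :: "('v \<times> 'v) set \<Rightarrow> 'v \<Rightarrow> 'v \<Rightarrow> 'v" where
  "lca E x y = (THE z. preceq E x z \<and> preceq E y z \<and>
                  (\<forall>w. preceq E x w \<and> preceq E y w \<longrightarrow> preceq E z w))"

definition time_map :: "'v set \<Rightarrow> ('v \<times> 'v) set \<Rightarrow> ('v \<Rightarrow> real) \<Rightarrow> bool" where
  "time_map V E \<tau> \<longleftrightarrow> (\<forall>x\<in>V. \<forall>y\<in>V. prec E x y \<longrightarrow> \<tau> x < \<tau> y)"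

definition relaxed_scenario ::
  "'v set \<Rightarrow> ('v \<times> 'v) set \<Rightarrow> 'v \<Rightarrow> 's set \<Rightarrow> ('s \<times> 's) set \<Rightarrow> 's \<Rightarrow>
   ('v \<Rightarrow> 's) \<Rightarrow> ('v \<Rightarrow> 's tree_elem) \<Rightarrow> ('v \<Rightarrow> real) \<Rightarrow> ('s \<Rightarrow> real) \<Rightarrow> bool" where
  "relaxed_scenario VT ET rT VS ES rS \<sigma> \<mu> \<tau>T \<tau>S \<longleftrightarrow>
     planted_tree VT ET rT \<and> planted_tree VS ES rS \<and>
     time_map VT ET \<tau>T \<and> time_map VS ES \<tau>S \<and>
     (\<forall>x\<in>leaves VT ET. \<sigma> x \<in> leaves VS ES) \<and>
     (\<forall>x\<in>VT. \<mu> x \<in> elems VS ES) \<and>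
     (\<forall>x\<in>VT. \<mu> x = Vx rS \<longleftrightarrow> x = rT) \<and>
     (\<forall>x\<in>VT. \<mu> x \<in> Vx ` leaves VS ES \<longleftrightarrow> x \<in> leaves VT ET) \<and>
     (\<forall>x\<in>leaves VT ET. \<mu> x = Vx (\<sigma> x)) \<and>
     (\<forall>x\<in>VT. \<forall>s. \<mu> x = Vx s \<longrightarrow> \<tau>S s = \<tau>T x) \<and>
     (\<forall>x\<in>VT. \<forall>u v. \<mu> x = Ed u v \<longrightarrow> \<tau>S v < \<tau>T x \<and> \<tau>T x < \<tau>S u)"

definition hgt_edge ::
  "('v \<times> 'v) set \<Rightarrow> ('s \<times> 's) set \<Rightarrow> ('v \<Rightarrow> 's tree_elem) \<Rightarrow> 'v \<Rightarrow> 'v \<Rightarrow> bool" where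
  "hgt_edge ET ES \<mu> u v \<longleftrightarrow> (u, v) \<in> ET \<and> \<not> comparable ES (\<mu> u) (\<mu> v)"

text \<open>The edge uv lies on the path between x and y: it lies on the path from x or
  from y up to lca(x,y).\<close>
definition on_path :: "('v \<times> 'v) set \<Rightarrow> 'v \<Rightarrow> 'v \<Rightarrow> 'v \<Rightarrow> 'v \<Rightarrow> bool" where
  "on_path E x y u v \<longleftrightarrow> (u, v) \<in> E \<and> (preceq E x v \<or> preceq E y v) \<and>
      prec E v (lca E x y)"

definition sO_edge ::
  "'v set \<Rightarrow> ('v \<times> 'v) set \<Rightarrow> ('s \<times> 's) set \<Rightarrow> ('v \<Rightarrow> 's) \<Rightarrow> ('v \<Rightarrow> 's tree_elem)
   \<Rightarrow> 'v \<Rightarrow> 'v \<Rightarrow> bool" where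
  "sO_edge VT ET ES \<sigma> \<mu> x y \<longleftrightarrow>
     x \<in> leaves VT ET \<and> y \<in> leaves VT ET \<and> x \<noteq> y \<and>
     \<mu> (lca ET x y) = Vx (lca ES (\<sigma> x) (\<sigma> y)) \<and>
     (\<forall>u v. on_path ET x y u v \<longrightarrow> \<not> hgt_edge ET ES \<mu> u v)"

text \<open>A graph (vertex set V, symmetric adjacency adj) is a cograph if it has no
  induced path on four vertices.\<close>
definition cograph :: "'a set \<Rightarrow> ('a \<Rightarrow> 'a \<Rightarrow> bool) \<Rightarrow> bool" where
  "cograph V adj \<longleftrightarrow> \<not> (\<exists>a\<in>V. \<exists>b\<in>V. \<exists>c\<in>V. \<exists>d\<in>V.
      distinct [a, b, c, d] \<and> adj a b \<and> adj b c \<and> adj c d \<and>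
      \<not> adj a c \<and> \<not> adj b d \<and> \<not> adj a d)"

end

theory Submission
  imports Defs
begin

(* Take an induced path a-b-c-d in sO. The last common ancestors of its three edges lie on one
   root path, so one of them, v = lca(x, y), is highest. Being free of HGT-edges up to the lca
   propagates along sO-edges, so all four leaves lie below v with no HGT-edge on their paths to v,
   and mu(v) is a vertex s of S. Following such a path upwards, the image under mu only rises,
   so each leaf p lies below a child f(p) of v with mu(f(p)) on an edge from s to a child h(f(p)),
   and sigma(p) lies below h(f(p)). For leaves in different subtrees of v the lca in T is v, so
   they are adjacent in sO iff their species separate at s, i.e. iff h(f(p)) and h(f(q)) differ.
   This complete multipartite structure across the subtrees of v forces an induced P4 into a
   single subtree of v, contradicting lca(x, y) = v. *)

lemma induced_P4_within_one_class:
  assumes "adj a b" "adj b c" "adj c d" "\<not> adj a c" "\<not> adj b d" "\<not> adj a d"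
    and classes: "\<And>p q. p \<in> {a, b, c, d} \<Longrightarrow> q \<in> {a, b, c, d} \<Longrightarrow> f p \<noteq> f q \<Longrightarrow>
      adj p q \<longleftrightarrow> h (f p) \<noteq> h (f q)"
  shows "f a = f b \<and> f b = f c \<and> f c = f d"
proof -
  have h_eq: "h (f p) = h (f q)" if "p \<in> {a, b, c, d}" "q \<in> {a, b, c, d}" "\<not> adj p q" for p q
    using classes[OF that(1,2)] that(3) by (cases "f p = f q") auto
  have "h (f a) = h (f b)" "h (f b) = h (f c)" "h (f c) = h (f d)"
    using h_eq[of a c] h_eq[of b d] h_eq[of a d] assms(4-6) by auto
  then show ?thesis
    using assms(1-3) classes[of a b] classes[of b c] classes[of c d] by auto
qed

lemma preceq_el_refl: "preceq_el E e e"
  by (cases e) (simp_all add: preceq_def)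

locale ptree =
  fixes V :: "'v set" and E :: "('v \<times> 'v) set" and r :: 'v
  assumes planted: "planted_tree V E r"
begin

lemma finite_V: "finite V"
  and edges_subset: "E \<subseteq> V \<times> V"
  and root_reaches: "x \<in> V \<Longrightarrow> (r, x) \<in> E\<^sup>*"
  and root_no_parent: "(x, r) \<notin> E"
  using planted unfolding planted_tree_def by blast+

lemma parent_unique: "(u, x) \<in> E \<Longrightarrow> (u', x) \<in> E \<Longrightarrow> u = u'"
proof -
  assume "(u, x) \<in> E" "(u', x) \<in> E"
  moreover have "x \<in> V - {r}"
    using \<open>(u, x) \<in> E\<close> edges_subset root_no_parent by blast
  ultimately show "u = u'"
    using planted unfolding planted_tree_def by blast
qed

lemma edge_vertices: "(u, v) \<in> E \<Longrightarrow> u \<in> V \<and> v \<in> V"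
  using edges_subset by blast

lemma descendant_in_V: "(x, y) \<in> E\<^sup>* \<Longrightarrow> x \<in> V \<Longrightarrow> y \<in> V"
  by (induction rule: rtrancl_induct) (use edges_subset in auto)

lemma acyclic: "acyclic E"
  unfolding acyclic_def
proof
  fix x
  show "(x, x) \<notin> E\<^sup>+"
  proof (cases "x \<in> V")
    case True
    then have "(r, x) \<in> E\<^sup>*" by (rule root_reaches)
    then show ?thesis
    proof (induction rule: rtrancl_induct)
      case base
      show ?case using root_no_parent by (blast dest: tranclD2)
    next
      case (step y z)
      show ?case
      proof
        assume "(z, z) \<in> E\<^sup>+"
        then obtain u where "(z, u) \<in> E\<^sup>*" "(u, z) \<in> E" by (blast dest: tranclD2)
        with step.hyps(2) have "(z, y) \<in> E\<^sup>*" using parent_unique by blast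
        with step.hyps(2) have "(y, y) \<in> E\<^sup>+" by (rule rtrancl_into_trancl2)
        with step.IH show False ..
      qed
    qed
  next
    case False
    then show ?thesis using edges_subset by (blast dest: tranclD)
  qed
qed

lemma ancestor_antisym: "(x, y) \<in> E\<^sup>* \<Longrightarrow> (y, x) \<in> E\<^sup>* \<Longrightarrow> x = y"
  using acyclic_impl_antisym_rtrancl[OF acyclic] by (rule antisymD)

lemma no_loop: "(x, x) \<notin> E"
  using acyclic by (auto simp: acyclic_def)

lemma ancestors_comparable:
  "(a, x) \<in> E\<^sup>* \<Longrightarrow> (b, x) \<in> E\<^sup>* \<Longrightarrow> (a, b) \<in> E\<^sup>* \<or> (b, a) \<in> E\<^sup>*"
proof (induction x arbitrary: b rule: rtrancl_induct)
  case base
  then show ?case by blast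
next
  case (step y z)
  from step.prems show ?case
  proof (cases rule: rtranclE)
    case base
    then show ?thesis using step.hyps by auto
  next
    case (step y')
    with \<open>(y, z) \<in> E\<close> have "y' = y" using parent_unique by blast
    then show ?thesis using step.IH step by blast
  qed
qed

lemma ancestor_of_parent: "(u, v) \<in> E \<Longrightarrow> (b, v) \<in> E\<^sup>* \<Longrightarrow> b \<noteq> v \<Longrightarrow> (b, u) \<in> E\<^sup>*"
  by (erule rtranclE) (auto dest: parent_unique)

lemma parent_below_parent: "(u, v) \<in> E \<Longrightarrow> (a, b) \<in> E \<Longrightarrow> (b, v) \<in> E\<^sup>* \<Longrightarrow> (a, u) \<in> E\<^sup>*"
  by (cases "b = v") (auto dest: parent_unique ancestor_of_parent intro: converse_rtrancl_into_rtrancl)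

lemma common_descendant_child_unique:
  assumes "(s, c) \<in> E" "(s, c') \<in> E" "(c, y) \<in> E\<^sup>*" "(c', y) \<in> E\<^sup>*"
  shows "c = c'"
proof (rule ccontr)
  assume "c \<noteq> c'"
  from ancestors_comparable[OF assms(3,4)] obtain p q where
    "(p, q) \<in> E\<^sup>*" "p \<noteq> q" "(s, p) \<in> E" "(s, q) \<in> E"
    using \<open>c \<noteq> c'\<close> assms(1,2) by blast
  then have "(p, s) \<in> E\<^sup>*" by (blast dest: ancestor_of_parent)
  with \<open>(s, p) \<in> E\<close> have "(s, s) \<in> E\<^sup>+" by (rule rtrancl_into_trancl2)
  then show False using acyclic by (simp add: acyclic_def)
qed

lemma leaf_no_proper_descendant: "x \<in> leaves V E \<Longrightarrow> (x, y) \<in> E\<^sup>* \<Longrightarrow> y = x"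
  unfolding leaves_def children_def by (erule converse_rtranclE) auto

lemma lca_eqI:
  assumes "(z, x) \<in> E\<^sup>*" "(z, y) \<in> E\<^sup>*"
    and "\<And>w. (w, x) \<in> E\<^sup>* \<Longrightarrow> (w, y) \<in> E\<^sup>* \<Longrightarrow> (w, z) \<in> E\<^sup>*"
  shows "lca E x y = z"
  unfolding lca_def preceq_def
  by (rule the_equality) (use assms ancestor_antisym in blast)+

lemma lca_exists:
  assumes "x \<in> V" "y \<in> V"
  shows "\<exists>z. (z, x) \<in> E\<^sup>* \<and> (z, y) \<in> E\<^sup>* \<and> (\<forall>w. (w, x) \<in> E\<^sup>* \<and> (w, y) \<in> E\<^sup>* \<longrightarrow> (w, z) \<in> E\<^sup>*)"
proof -
  define C where "C = {z. (z, x) \<in> E\<^sup>* \<and> (z, y) \<in> E\<^sup>*}"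
  have "finite E" using finite_V edges_subset by (meson finite_SigmaI finite_subset)
  then have "wf (E\<inverse>)" using acyclic by (rule finite_acyclic_wf_converse)
  moreover have "r \<in> C" unfolding C_def using assms root_reaches by blast
  ultimately obtain z where z: "z \<in> C" and lowest: "\<And>c. (z, c) \<in> E \<Longrightarrow> c \<notin> C"
    by (rule wfE_min) auto
  have "(w, z) \<in> E\<^sup>*" if "w \<in> C" for w
  proof (rule ccontr)
    assume "(w, z) \<notin> E\<^sup>*"
    then have "(z, w) \<in> E\<^sup>+"
      using ancestors_comparable[of z x w] z that unfolding C_def
      by (auto simp: rtrancl_eq_or_trancl)
    then obtain c where "(z, c) \<in> E" "(c, w) \<in> E\<^sup>*" by (blast dest: tranclD)
    then have "c \<in> C" using that unfolding C_def by (blast intro: rtrancl_trans)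
    with lowest \<open>(z, c) \<in> E\<close> show False by blast
  qed
  with z show ?thesis unfolding C_def by blast
qed

lemma lca_greatest:
  assumes "x \<in> V" "y \<in> V"
  shows "(lca E x y, x) \<in> E\<^sup>*" "(lca E x y, y) \<in> E\<^sup>*"
    and "(w, x) \<in> E\<^sup>* \<Longrightarrow> (w, y) \<in> E\<^sup>* \<Longrightarrow> (w, lca E x y) \<in> E\<^sup>*"
  using lca_exists[OF assms] lca_eqI by metis+

lemma lca_commute: "lca E x y = lca E y x"
  unfolding lca_def by (metis (no_types, lifting))

lemma lca_eq_iff_distinct_children:
  assumes "(v, cx) \<in> E" "(v, cy) \<in> E" "(cx, x) \<in> E\<^sup>*" "(cy, y) \<in> E\<^sup>*"
  shows "lca E x y = v \<longleftrightarrow> cx \<noteq> cy"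
proof
  assume lca: "lca E x y = v"
  have "x \<in> V" "y \<in> V"
    using assms edges_subset descendant_in_V by blast+
  show "cx \<noteq> cy"
  proof
    assume "cx = cy"
    with assms have "(cx, v) \<in> E\<^sup>*"
      using lca_greatest(3)[OF \<open>x \<in> V\<close> \<open>y \<in> V\<close>] lca by metis
    with assms(1) have "(v, v) \<in> E\<^sup>+" by (rule rtrancl_into_trancl2)
    then show False using acyclic by (simp add: acyclic_def)
  qed
next
  assume "cx \<noteq> cy"
  have "(v, x) \<in> E\<^sup>*" "(v, y) \<in> E\<^sup>*"
    using assms by (blast intro: converse_rtrancl_into_rtrancl)+
  then show "lca E x y = v"
  proof (rule lca_eqI)
    fix w assume wx: "(w, x) \<in> E\<^sup>*" and wy: "(w, y) \<in> E\<^sup>*"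
    show "(w, v) \<in> E\<^sup>*"
    proof (rule ccontr)
      assume "(w, v) \<notin> E\<^sup>*"
      then have "(v, w) \<in> E\<^sup>+"
        using ancestors_comparable[OF wx, of v] \<open>(v, x) \<in> E\<^sup>*\<close>
        by (auto simp: rtrancl_eq_or_trancl)
      then obtain c where "(v, c) \<in> E" "(c, w) \<in> E\<^sup>*" by (blast dest: tranclD)
      then have "c = cx" "c = cy"
        using assms wx wy common_descendant_child_unique by (meson rtrancl_trans)+
      with \<open>cx \<noteq> cy\<close> show False by simp
    qed
  qed
qed

lemma preceq_el_trans:
  assumes "e1 \<in> elems V E" "e2 \<in> elems V E" "preceq_el E e1 e2" "preceq_el E e2 e3"
  shows "preceq_el E e1 e3"
  using assms
  by (cases e1; cases e2; cases e3)
    (auto simp: elems_def preceq_def dest: parent_below_parent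
      intro: rtrancl_trans converse_rtrancl_into_rtrancl)

lemma below_vertex_below_child_edge:
  assumes "e \<in> elems V E" "preceq_el E e (Vx s)" "e \<noteq> Vx s"
  shows "\<exists>c. (s, c) \<in> E \<and> preceq_el E e (Ed s c)"
proof (cases e)
  case (Vx t)
  with assms have "(s, t) \<in> E\<^sup>+" by (auto simp: preceq_def rtrancl_eq_or_trancl)
  with Vx show ?thesis by (auto simp: preceq_def dest: tranclD)
next
  case (Ed a b)
  with assms have "(s, b) \<in> E\<^sup>+"
    by (auto simp: elems_def preceq_def intro: rtrancl_into_trancl1)
  with Ed show ?thesis by (auto simp: preceq_def dest: tranclD)
qed

end

fun time_window :: "('s \<Rightarrow> real) \<Rightarrow> 's tree_elem \<Rightarrow> real set" where
  "time_window \<tau> (Vx s) = {\<tau> s}"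
| "time_window \<tau> (Ed u v) = {\<tau> v<..<\<tau> u}"

locale timed_ptree = ptree V E r for V E r +
  fixes \<tau> :: "'v \<Rightarrow> real"
  assumes time_map: "time_map V E \<tau>"
begin

lemma time_less: "(y, x) \<in> E\<^sup>* \<Longrightarrow> y \<in> V \<Longrightarrow> x \<noteq> y \<Longrightarrow> \<tau> x < \<tau> y"
  using time_map descendant_in_V unfolding time_map_def prec_def preceq_def by blast

lemma time_le: "(y, x) \<in> E\<^sup>* \<Longrightarrow> y \<in> V \<Longrightarrow> \<tau> x \<le> \<tau> y"
  using time_less by (cases "x = y") force+

lemma time_edge: "(u, v) \<in> E \<Longrightarrow> \<tau> v < \<tau> u"
  using time_less edges_subset no_loop by blast

lemma time_window_mono:
  assumes "e1 \<in> elems V E" "e2 \<in> elems V E" "preceq_el E e1 e2" "e1 \<noteq> e2"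
    and "t1 \<in> time_window \<tau> e1" "t2 \<in> time_window \<tau> e2"
  shows "t1 < t2"
proof (cases e1; cases e2)
  fix u v a b assume e: "e1 = Ed u v" "e2 = Ed a b"
  with assms have "(a, b) \<in> E" "(b, v) \<in> E\<^sup>*" "(u, v) \<in> E"
    by (auto simp: elems_def preceq_def)
  moreover have "b \<noteq> v" using e assms(4) parent_unique \<open>(a, b) \<in> E\<close> \<open>(u, v) \<in> E\<close> by blast
  ultimately have "(b, u) \<in> E\<^sup>*" using ancestor_of_parent by blast
  then show ?thesis
    using e assms time_le[of b u] edges_subset \<open>(a, b) \<in> E\<close> by force
qed (use assms in \<open>auto simp: elems_def preceq_def dest: edge_vertices time_less time_le
    intro: le_less_trans less_le_trans\<close>)

end

(* Only the conditions of a relaxed scenario that the proof uses; mu_time is (S2) and (S3). *)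
locale scenario =
  T: timed_ptree VT ET rT \<tau>T + S: timed_ptree VS ES rS \<tau>S
  for VT :: "'v set" and ET rT \<tau>T and VS :: "'s set" and ES rS \<tau>S +
  fixes \<sigma> :: "'v \<Rightarrow> 's" and \<mu> :: "'v \<Rightarrow> 's tree_elem"
  assumes mu_elems: "x \<in> VT \<Longrightarrow> \<mu> x \<in> elems VS ES"
    and mu_leaf: "x \<in> leaves VT ET \<Longrightarrow> \<mu> x = Vx (\<sigma> x)"
    and mu_time: "x \<in> VT \<Longrightarrow> \<tau>T x \<in> time_window \<tau>S (\<mu> x)"
begin

abbreviation sO :: "'v \<Rightarrow> 'v \<Rightarrow> bool" where
  "sO \<equiv> sO_edge VT ET ES \<sigma> \<mu>"

lemma mu_edge_mono:
  assumes "(u, w) \<in> ET" "\<not> hgt_edge ET ES \<mu> u w"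
  shows "preceq_el ES (\<mu> w) (\<mu> u)"
proof (rule ccontr)
  assume "\<not> preceq_el ES (\<mu> w) (\<mu> u)"
  with assms have "preceq_el ES (\<mu> u) (\<mu> w)" "\<mu> u \<noteq> \<mu> w"
    unfolding hgt_edge_def comparable_def using preceq_el_refl by metis+
  moreover have "u \<in> VT" "w \<in> VT" using assms(1) T.edge_vertices by blast+
  ultimately have "\<tau>T u < \<tau>T w"
    using S.time_window_mono mu_elems mu_time by blast
  with T.time_edge[OF assms(1)] show False by simp
qed

lemma mu_child_below_child_edge:
  assumes "(v, w) \<in> ET" "\<not> hgt_edge ET ES \<mu> v w" "\<mu> v = Vx s"
  shows "\<exists>c. (s, c) \<in> ES \<and> preceq_el ES (\<mu> w) (Ed s c)"
proof (rule S.below_vertex_below_child_edge)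
  have "v \<in> VT" "w \<in> VT" using assms(1) T.edge_vertices by blast+
  then show "\<mu> w \<in> elems VS ES" by (blast intro: mu_elems)
  show "preceq_el ES (\<mu> w) (Vx s)" using mu_edge_mono assms by metis
  show "\<mu> w \<noteq> Vx s"
    using mu_time[OF \<open>v \<in> VT\<close>] mu_time[OF \<open>w \<in> VT\<close>] T.time_edge[OF assms(1)] assms(3) by auto
qed

definition hgt_free_path :: "'v \<Rightarrow> 'v \<Rightarrow> bool" where
  "hgt_free_path v p \<longleftrightarrow> (v, p) \<in> ET\<^sup>* \<and>
     (\<forall>u z. (u, z) \<in> ET \<and> (z, p) \<in> ET\<^sup>* \<and> (v, z) \<in> ET\<^sup>* \<and> z \<noteq> v \<longrightarrow> \<not> hgt_edge ET ES \<mu> u z)"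

lemma hgt_free_path_child:
  assumes "hgt_free_path v p" "(v, w) \<in> ET" "(w, p) \<in> ET\<^sup>*"
  shows "\<not> hgt_edge ET ES \<mu> v w" "hgt_free_path w p"
proof -
  have "w \<noteq> v" using assms(2) T.no_loop by blast
  then show "\<not> hgt_edge ET ES \<mu> v w"
    using assms unfolding hgt_free_path_def by blast
  have "z \<noteq> v" if "(w, z) \<in> ET\<^sup>*" for z
    using that assms(2) \<open>w \<noteq> v\<close> T.ancestor_antisym by (blast intro: converse_rtrancl_into_rtrancl)
  then show "hgt_free_path w p"
    using assms unfolding hgt_free_path_def by (blast intro: converse_rtrancl_into_rtrancl)
qed

lemma sigma_elem: "p \<in> leaves VT ET \<Longrightarrow> Vx (\<sigma> p) \<in> elems VS ES"
  using mu_elems mu_leaf unfolding leaves_def by fastforce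

lemma leaf_below_mu_of_hgt_free_path:
  assumes "p \<in> leaves VT ET" "hgt_free_path w p"
  shows "preceq_el ES (Vx (\<sigma> p)) (\<mu> w)"
proof -
  have "p \<in> VT" using assms(1) unfolding leaves_def by blast
  have "(w, p) \<in> ET\<^sup>*" using assms(2) unfolding hgt_free_path_def by blast
  then show ?thesis using assms(2)
  proof (induction rule: converse_rtrancl_induct)
    case base
    show ?case using mu_leaf[OF assms(1)] preceq_el_refl by metis
  next
    case (step w w')
    with hgt_free_path_child have "preceq_el ES (Vx (\<sigma> p)) (\<mu> w')"
      and "preceq_el ES (\<mu> w') (\<mu> w)"
      using mu_edge_mono by blast+
    moreover have "\<mu> w' \<in> elems VS ES"
      using mu_elems step.hyps T.edge_vertices by blast
    ultimately show ?case using S.preceq_el_trans sigma_elem[OF assms(1)] by blast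
  qed
qed

lemma leaf_below_child_edge:
  assumes "p \<in> leaves VT ET" "hgt_free_path w p" "w \<in> VT" "preceq_el ES (\<mu> w) (Ed s c)"
  shows "(c, \<sigma> p) \<in> ES\<^sup>*"
proof -
  have "preceq_el ES (Vx (\<sigma> p)) (Ed s c)"
    using S.preceq_el_trans[OF sigma_elem[OF assms(1)] mu_elems[OF assms(3)]]
      leaf_below_mu_of_hgt_free_path[OF assms(1,2)] assms(4) .
  then show ?thesis by (simp add: preceq_def)
qed

lemma sO_sym: "sO x y \<Longrightarrow> sO y x"
  unfolding sO_edge_def on_path_def by (auto simp: T.lca_commute S.lca_commute)

lemma sO_hgt_free_path: "sO x y \<Longrightarrow> hgt_free_path (lca ET x y) x"
  using T.lca_greatest(1)
  unfolding sO_edge_def on_path_def hgt_free_path_def leaves_def prec_def preceq_def by blast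

lemma sO_iff_mu_lca:
  assumes "x \<in> leaves VT ET" "y \<in> leaves VT ET" "x \<noteq> y"
    and "hgt_free_path (lca ET x y) x" "hgt_free_path (lca ET x y) y"
  shows "sO x y \<longleftrightarrow> \<mu> (lca ET x y) = Vx (lca ES (\<sigma> x) (\<sigma> y))"
  using assms
  unfolding sO_edge_def on_path_def hgt_free_path_def prec_def preceq_def by blast

lemma hgt_free_path_along_sO:
  assumes "sO p q" "(v, lca ET p q) \<in> ET\<^sup>*" "hgt_free_path v q"
  shows "hgt_free_path v p"
proof -
  define L where "L = lca ET p q"
  have "hgt_free_path L p" "hgt_free_path L q"
    using sO_hgt_free_path sO_sym assms(1) T.lca_commute unfolding L_def by metis+
  then have Lp: "(L, p) \<in> ET\<^sup>*" and Lq: "(L, q) \<in> ET\<^sup>*" unfolding hgt_free_path_def by blast+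
  have "\<not> hgt_edge ET ES \<mu> u z"
    if "(u, z) \<in> ET" "(z, p) \<in> ET\<^sup>*" "(v, z) \<in> ET\<^sup>*" "z \<noteq> v" for u z
  proof (cases "(z, L) \<in> ET\<^sup>*")
    case True
    then have "(z, q) \<in> ET\<^sup>*" using Lq by (rule rtrancl_trans)
    then show ?thesis using that assms(3) unfolding hgt_free_path_def by blast
  next
    case False
    then have "(L, z) \<in> ET\<^sup>*" "z \<noteq> L"
      using T.ancestors_comparable[OF that(2) Lp] by auto
    then show ?thesis using that \<open>hgt_free_path L p\<close> unfolding hgt_free_path_def by blast
  qed
  moreover have "(v, p) \<in> ET\<^sup>*" using assms(2) Lp unfolding L_def by (rule rtrancl_trans)
  ultimately show ?thesis unfolding hgt_free_path_def by blast
qed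

lemma sO_hgt_free_paths:
  assumes "sO x y"
  shows "hgt_free_path (lca ET x y) x" "hgt_free_path (lca ET x y) y"
proof -
  show "hgt_free_path (lca ET x y) x" using assms by (rule sO_hgt_free_path)
  have "hgt_free_path (lca ET y x) y" using sO_sym[OF assms] by (rule sO_hgt_free_path)
  then show "hgt_free_path (lca ET x y) y" by (simp only: T.lca_commute)
qed

lemma sO_lca_not_leaf: "sO x y \<Longrightarrow> lca ET x y \<notin> leaves VT ET"
  using sO_hgt_free_paths T.leaf_no_proper_descendant
  unfolding sO_edge_def hgt_free_path_def by metis

lemma hgt_free_path_sO_iff:
  assumes "sO p q" "(v, lca ET p q) \<in> ET\<^sup>*"
  shows "hgt_free_path v p \<longleftrightarrow> hgt_free_path v q"
proof
  assume "hgt_free_path v p"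
  moreover have "(v, lca ET q p) \<in> ET\<^sup>*" using assms(2) by (simp only: T.lca_commute)
  ultimately show "hgt_free_path v q"
    using hgt_free_path_along_sO sO_sym[OF assms(1)] by blast
next
  assume "hgt_free_path v q"
  then show "hgt_free_path v p" using hgt_free_path_along_sO assms by blast
qed

lemma sO_path_hgt_free_below_top_lca:
  assumes ab: "sO a b" and bc: "sO b c" and cd: "sO c d"
  obtains x y where "x \<in> {a, b, c, d}" "y \<in> {a, b, c, d}" "sO x y"
    "\<And>p. p \<in> {a, b, c, d} \<Longrightarrow> hgt_free_path (lca ET x y) p"
proof -
  have "(lca ET a b, b) \<in> ET\<^sup>*" "(lca ET b c, b) \<in> ET\<^sup>*"
    "(lca ET b c, c) \<in> ET\<^sup>*" "(lca ET c d, c) \<in> ET\<^sup>*"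
    using sO_hgt_free_paths ab bc cd unfolding hgt_free_path_def by blast+
  then consider
      (bc_top) "(lca ET b c, lca ET a b) \<in> ET\<^sup>*" "(lca ET b c, lca ET c d) \<in> ET\<^sup>*"
    | (ab_top) "(lca ET a b, lca ET b c) \<in> ET\<^sup>*" "(lca ET a b, lca ET c d) \<in> ET\<^sup>*"
    | (cd_top) "(lca ET c d, lca ET b c) \<in> ET\<^sup>*" "(lca ET c d, lca ET a b) \<in> ET\<^sup>*"
    using T.ancestors_comparable rtrancl_trans by metis
  then show thesis
  proof cases
    case bc_top
    then have "hgt_free_path (lca ET b c) a" "hgt_free_path (lca ET b c) d"
      using hgt_free_path_sO_iff[OF ab] hgt_free_path_sO_iff[OF cd] sO_hgt_free_paths[OF bc]
      by blast+
    then show thesis using that[OF _ _ bc] sO_hgt_free_paths[OF bc] by blast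
  next
    case ab_top
    then have "hgt_free_path (lca ET a b) c"
      using hgt_free_path_sO_iff[OF bc] sO_hgt_free_paths[OF ab] by blast
    with ab_top have "hgt_free_path (lca ET a b) d"
      using hgt_free_path_sO_iff[OF cd] by blast
    then show thesis
      using that[OF _ _ ab] sO_hgt_free_paths[OF ab] \<open>hgt_free_path (lca ET a b) c\<close> by blast
  next
    case cd_top
    then have "hgt_free_path (lca ET c d) b"
      using hgt_free_path_sO_iff[OF bc] sO_hgt_free_paths[OF cd] by blast
    with cd_top have "hgt_free_path (lca ET c d) a"
      using hgt_free_path_sO_iff[OF ab] by blast
    then show thesis
      using that[OF _ _ cd] sO_hgt_free_paths[OF cd] \<open>hgt_free_path (lca ET c d) b\<close> by blast
  qed
qed

lemma induced_P4_not_hgt_free_below_lca: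
  assumes xy: "sO x y" "x \<in> Q" "y \<in> Q"
    and free: "\<And>p. p \<in> Q \<Longrightarrow> hgt_free_path (lca ET x y) p"
    and Q: "Q = {a, b, c, d}"
    and P4: "sO a b" "sO b c" "sO c d" "\<not> sO a c" "\<not> sO b d" "\<not> sO a d"
  shows False
proof -
  define v where "v = lca ET x y"
  define s where "s = lca ES (\<sigma> x) (\<sigma> y)"
  have mu_v: "\<mu> v = Vx s" using xy(1) unfolding sO_edge_def v_def s_def by blast
  have leaf: "p \<in> leaves VT ET" if "p \<in> Q" for p
    using that P4(1-3) unfolding Q sO_edge_def by blast
  have "(v, p) \<in> ET\<^sup>+" if "p \<in> Q" for p
    using free[OF that] leaf[OF that] sO_lca_not_leaf[OF xy(1)] unfolding v_def hgt_free_path_def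
    by (metis rtrancl_eq_or_trancl)
  then obtain f where f: "(v, f p) \<in> ET" "(f p, p) \<in> ET\<^sup>*" if "p \<in> Q" for p
    by (metis tranclD)
  obtain h where h: "(s, h w) \<in> ES" "preceq_el ES (\<mu> w) (Ed s (h w))"
    if "(v, w) \<in> ET" "\<not> hgt_edge ET ES \<mu> v w" for w
    using mu_child_below_child_edge[OF _ _ mu_v] by metis
  have species_child: "(s, h (f p)) \<in> ES" "(h (f p), \<sigma> p) \<in> ES\<^sup>*" if "p \<in> Q" for p
  proof -
    note child = hgt_free_path_child[OF free[OF that, folded v_def] f[OF that]]
    show "(s, h (f p)) \<in> ES" using h(1)[OF f(1)[OF that] child(1)] .
    have "f p \<in> VT" using f(1)[OF that] T.edge_vertices by blast
    then show "(h (f p), \<sigma> p) \<in> ES\<^sup>*"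
      using leaf_below_child_edge[OF leaf[OF that] child(2)] h(2)[OF f(1)[OF that] child(1)]
      by blast
  qed
  have "sO p q \<longleftrightarrow> h (f p) \<noteq> h (f q)" if "p \<in> Q" "q \<in> Q" "f p \<noteq> f q" for p q
  proof -
    have "lca ET p q = v"
      using T.lca_eq_iff_distinct_children f that by blast
    then have "sO p q \<longleftrightarrow> \<mu> v = Vx (lca ES (\<sigma> p) (\<sigma> q))"
      using sO_iff_mu_lca leaf free that unfolding v_def by metis
    also have "\<dots> \<longleftrightarrow> lca ES (\<sigma> p) (\<sigma> q) = s" using mu_v by auto
    also have "\<dots> \<longleftrightarrow> h (f p) \<noteq> h (f q)"
      using S.lca_eq_iff_distinct_children species_child that by blast
    finally show ?thesis .
  qed
  then have "f a = f b \<and> f b = f c \<and> f c = f d"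
    using induced_P4_within_one_class[OF P4, of f h] unfolding Q by blast
  then have "f x = f y" using xy unfolding Q by auto
  then show False
    using T.lca_eq_iff_distinct_children f xy unfolding v_def by metis
qed

end

theorem lemma35:
  fixes VT :: "'v set" and ET :: "('v \<times> 'v) set" and rT :: 'v
    and VS :: "'s set" and ES :: "('s \<times> 's) set" and rS :: 's
    and \<sigma> :: "'v \<Rightarrow> 's" and \<mu> :: "'v \<Rightarrow> 's tree_elem"
    and \<tau>T :: "'v \<Rightarrow> real" and \<tau>S :: "'s \<Rightarrow> real"
  assumes "relaxed_scenario VT ET rT VS ES rS \<sigma> \<mu> \<tau>T \<tau>S"
  shows "cograph (leaves VT ET) (sO_edge VT ET ES \<sigma> \<mu>)"
proof -
  interpret scenario VT ET rT \<tau>T VS ES rS \<tau>S \<sigma> \<mu>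
  proof
    show "\<tau>T x \<in> time_window \<tau>S (\<mu> x)" if "x \<in> VT" for x
      using assms that unfolding relaxed_scenario_def by (cases "\<mu> x") auto
  qed (use assms in \<open>auto simp: relaxed_scenario_def\<close>)
  show ?thesis
    unfolding cograph_def
  proof clarify
    fix a b c d
    assume P4: "sO a b" "sO b c" "sO c d" "\<not> sO a c" "\<not> sO b d" "\<not> sO a d"
    obtain x y where "x \<in> {a, b, c, d}" "y \<in> {a, b, c, d}" "sO x y"
      "\<And>p. p \<in> {a, b, c, d} \<Longrightarrow> hgt_free_path (lca ET x y) p"
      using sO_path_hgt_free_below_top_lca[OF P4(1-3)] by blast
    then show False using induced_P4_not_hgt_free_below_lca[OF _ _ _ _ refl P4] by blast
  qed
qed

end
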